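(* Let $\alpha\in\mathbb Z^n$ and let $\mathcal S\subseteq\mathbb R^n$ be a convex set such that $\mathrm{conv}(\mathcal S\cap\mathbb Z^n)$ is the nonempty polyhedron $\mathcal P=\{x\in\mathbb R^n: Ax\le b\}$ with $A\in\mathbb Z^{m\times n}$ (rows $a_1^T,\dots,a_m^T$) and $b\in\mathbb R^m$. Assume $\mathrm{rec.cone}(\mathcal S)=\{x: Ax\le 0\}$ and $\inf\{\alpha^Tx: x\in\mathcal S\}>-\infty$. Define $b'_i=\sup\{a_i^Tx: x\in\mathcal S\}$ for $i=1,\dots,m$ and assume every $b'_i$ is finite. Then $$\inf\{\alpha^Tx:x\in\mathcal S\cap\mathbb Z^n\}-\inf\{\alpha^Tx:x\in\mathcal S\}\le n\|\alpha\|_1\Delta\,(1+\|b-b'\|_\infty),$$ where $\Delta$ is the largest absolute value of a determinant of a square submatrix of $A$.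
   Context: $\mathrm{rec.cone}(\mathcal S)=\{d: x+\lambda d\in\mathcal S\ \forall\lambda\ge0,\ \forall x\in\mathcal S\}$; $\mathrm{conv}$ denotes convex hull. *)

theory Defs
  imports "HOL-Analysis.Analysis"
begin

definition int_points :: "(real^'n) set" where
  "int_points = {x. \<forall>i. x $ i \<in> \<int>}"

definition rec_cone :: "(real^'n) set \<Rightarrow> (real^'n) set" where
  "rec_cone S = {d. \<forall>x\<in>S. \<forall>t::real. t \<ge> 0 \<longrightarrow> x + t *\<^sub>R d \<in> S}"

text \<open>Determinant of the square submatrix of A with rows rs and columns cs
  (given as distinct lists of equal length), Leibniz formula.\<close>
definition subdet :: "real^'n^'m \<Rightarrow> 'm list \<Rightarrow> 'n list \<Rightarrow> real" where
  "subdet A rs cs = (\<Sum>p | p permutes {0..<length rs}.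
       of_int (sign p) * (\<Prod>i<length rs. A $ (rs ! i) $ (cs ! (p i))))"

definition max_subdet :: "real^'n^'m \<Rightarrow> real" where
  "max_subdet A = Max {\<bar>subdet A rs cs\<bar> | rs cs.
       distinct rs \<and> distinct cs \<and> length rs = length cs \<and> length rs \<ge> 1}"

end

(* Let z0 minimise alpha over the integer points Z of S; it exists because alpha is integral
   and bounded below on S. As conv Z = P, z0 also minimises alpha over P, so by Farkas' lemma
   there are multipliers u >= 0, supported on the constraints active at z0, with u^T A = -alpha;
   by Caratheodory's theorem for cones the rows in the support can be taken linearly independent.
   Then alpha^T z0 = -u^T b while alpha^T x >= -u^T b' on S, so the gap is at most
   sum_i u_i (b'_i - b_i) <= (sum_i u_i) ||b - b'||_oo. The support rows contain a nonsingular
   integral square submatrix, so Cramer's rule bounds each u_i by Delta ||alpha||_1, and there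
   are at most n of them. *)

theory Submission
  imports Defs Jordan_Normal_Form.Determinant
begin

(* Square submatrices are handled as Jordan_Normal_Form matrices, which provide Cramer's rule and
   Laplace expansion; their notation is hidden in favour of that of HOL-Analysis. *)
hide_const (open) Matrix.row Matrix.col Matrix.vec Matrix.mat Matrix.orthogonal
no_notation vec_index (infixl "$" 100)
no_notation scalar_prod (infix "\<bullet>" 70)

lemma cramer_minor_expansion:
  fixes M :: "'a::comm_ring_1 Matrix.mat"
  assumes M: "M \<in> carrier_mat k k" and p: "p < k"
    and sol: "\<And>q. q < k \<Longrightarrow> (\<Sum>i<k. u i * M $$ (i, q)) = a q"
  shows "u p * det M = (\<Sum>q<k. a q * ((-1) ^ (q + p) * det (mat_delete M p q)))"
proof -
  define T where "T = transpose_mat M"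
  have T: "T \<in> carrier_mat k k" using M by (simp add: T_def)
  have Tu: "T *\<^sub>v Matrix.vec k u = Matrix.vec k a"
  proof (rule eq_vecI)
    fix q assume "q < dim_vec (Matrix.vec k a)"
    then have q: "q < k" by simp
    have "vec_index (T *\<^sub>v Matrix.vec k u) q = (\<Sum>i<k. u i * M $$ (i, q))"
      using M q by (auto simp: T_def mult_mat_vec_def scalar_prod_def atLeast0LessThan
          mult.commute intro!: sum.cong)
    then show "vec_index (T *\<^sub>v Matrix.vec k u) q = vec_index (Matrix.vec k a) q"
      using sol[OF q] q by simp
  qed (use T in simp)
  define R where "R = replace_col T (Matrix.vec k a) p"
  have R: "R \<in> carrier_mat k k" using T by (simp add: R_def replace_col_def)
  have "u p * det M = det R"
    using cramer_lemma_mat[OF T _ p, of "Matrix.vec k u"] Tu M p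
    by (simp add: R_def T_def det_transpose)
  also have "\<dots> = (\<Sum>q<k. R $$ (q, p) * cofactor R q p)"
    by (rule laplace_expansion_column[OF R p])
  also have "\<dots> = (\<Sum>q<k. a q * ((-1) ^ (q + p) * det (mat_delete M p q)))"
  proof (rule sum.cong[OF refl])
    fix q assume q: "q \<in> {..<k}"
    have "mat_delete R q p = transpose_mat (mat_delete M p q)"
      using M T q p by (auto simp: R_def T_def mat_delete_def replace_col_def)
    then have "det (mat_delete R q p) = det (mat_delete M p q)"
      by (simp add: det_transpose[OF mat_delete_carrier[OF M]])
    moreover have "R $$ (q, p) = a q" using q p T by (simp add: R_def replace_col_def)
    ultimately show "R $$ (q, p) * cofactor R q p
        = a q * ((-1) ^ (q + p) * det (mat_delete M p q))"
      by (simp add: cofactor_def)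
  qed
  finally show ?thesis .
qed

lemma cramer_abs_bound:
  fixes M :: "real Matrix.mat"
  assumes M: "M \<in> carrier_mat k k" and det_ge: "1 \<le> \<bar>det M\<bar>" and p: "p < k"
    and sol: "\<And>q. q < k \<Longrightarrow> (\<Sum>i<k. u i * M $$ (i, q)) = a q"
    and minors: "\<And>q. q < k \<Longrightarrow> \<bar>det (mat_delete M p q)\<bar> \<le> D"
  shows "\<bar>u p\<bar> \<le> D * (\<Sum>q<k. \<bar>a q\<bar>)"
proof -
  have "\<bar>u p\<bar> \<le> \<bar>u p * det M\<bar>"
    using det_ge by (simp add: abs_mult mult_le_cancel_left1)
  also have "\<dots> = \<bar>\<Sum>q<k. a q * ((-1) ^ (q + p) * det (mat_delete M p q))\<bar>"
    by (simp only: cramer_minor_expansion[OF M p sol])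
  also have "\<dots> \<le> (\<Sum>q<k. \<bar>a q\<bar> * \<bar>det (mat_delete M p q)\<bar>)"
    by (rule order_trans[OF sum_abs]) (simp add: abs_mult power_abs)
  also have "\<dots> \<le> (\<Sum>q<k. \<bar>a q\<bar> * D)"
    using minors by (intro sum_mono mult_left_mono) auto
  finally show ?thesis by (simp add: sum_distrib_left mult.commute)
qed

definition square_submat :: "real^'n^'m \<Rightarrow> 'm list \<Rightarrow> 'n list \<Rightarrow> real Matrix.mat" where
  "square_submat A rs cs = Matrix.mat (length rs) (length rs) (\<lambda>(i, j). A $ (rs ! i) $ (cs ! j))"

definition delete_nth :: "nat \<Rightarrow> 'a list \<Rightarrow> 'a list" where
  "delete_nth p xs = take p xs @ drop (Suc p) xs"

lemma length_delete_nth: "p < length xs \<Longrightarrow> length (delete_nth p xs) = length xs - 1"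
  by (simp add: delete_nth_def)

lemma nth_delete_nth:
  "p < length xs \<Longrightarrow> i < length xs - 1 \<Longrightarrow> delete_nth p xs ! i = xs ! (if i < p then i else Suc i)"
  by (auto simp: delete_nth_def nth_append min_def)

lemma distinct_delete_nth:
  assumes "distinct xs" "p < length xs"
  shows "distinct (delete_nth p xs)"
proof -
  have "distinct (take p xs @ xs ! p # drop (Suc p) xs)"
    using assms by (simp add: id_take_nth_drop[symmetric])
  then show ?thesis by (simp add: delete_nth_def)
qed

lemma square_submat_carrier: "square_submat A rs cs \<in> carrier_mat (length rs) (length rs)"
  by (simp add: square_submat_def)

lemma subdet_eq_det_square_submat: "subdet A rs cs = det (square_submat A rs cs)"
  by (simp add: subdet_def det_def square_submat_def atLeast0LessThan)

lemma mat_delete_square_submat: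
  assumes "p < length rs" "q < length rs" "length cs = length rs"
  shows "mat_delete (square_submat A rs cs) p q = square_submat A (delete_nth p rs) (delete_nth q cs)"
  using assms by (auto simp: mat_delete_def square_submat_def length_delete_nth nth_delete_nth)

lemma det_square_submat_Ints:
  assumes "\<forall>i j. A $ i $ j \<in> \<int>"
  shows "det (square_submat A rs cs) \<in> \<int>"
  using assms unfolding det_def square_submat_def
  by (auto intro!: Ints_sum Ints_prod Ints_mult simp: atLeast0LessThan)

lemma finite_subdets:
  fixes A :: "real^'n^'m"
  shows "finite {\<bar>subdet A rs cs\<bar> | rs cs.
     distinct rs \<and> distinct cs \<and> length rs = length cs \<and> length rs \<ge> 1}"
proof -
  have "finite {rs :: 'm list. distinct rs}" "finite {cs :: 'n list. distinct cs}"
    using finite_subset_distinct[of "UNIV :: 'm set"] finite_subset_distinct[of "UNIV :: 'n set"]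
    by simp_all
  then have "finite ({rs :: 'm list. distinct rs} \<times> {cs :: 'n list. distinct cs})" by simp
  then show ?thesis
    by (rule finite_surj[where f = "\<lambda>(rs, cs). \<bar>subdet A rs cs\<bar>"]) auto
qed

lemma abs_subdet_le_max_subdet:
  fixes A :: "real^'n^'m"
  assumes "distinct rs" "distinct cs" "length rs = length cs" "length rs \<ge> 1"
  shows "\<bar>subdet A rs cs\<bar> \<le> max_subdet A"
  unfolding max_subdet_def using assms by (intro Max_ge[OF finite_subdets]) blast

lemma max_subdet_nonneg: "0 \<le> max_subdet A"
  using abs_subdet_le_max_subdet[of "[undefined]" "[undefined]" A] by simp

(* The minor of a 1x1 submatrix is the empty matrix, of determinant 1. *)
lemma abs_det_minor_le_max_subdet:
  assumes "distinct rs" "distinct cs" "length rs = length cs" "p < length rs" "q < length rs"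
    and "1 \<le> max_subdet A"
  shows "\<bar>det (mat_delete (square_submat A rs cs) p q)\<bar> \<le> max_subdet A"
proof (cases "length rs = 1")
  case True
  then have "mat_delete (square_submat A rs cs) p q \<in> carrier_mat 0 0"
    using mat_delete_carrier[OF square_submat_carrier] by (metis diff_self_eq_0)
  then have "det (mat_delete (square_submat A rs cs) p q) = 1"
    by (simp add: det_def')
  then show ?thesis using assms by simp
next
  case False
  then show ?thesis
    using assms abs_subdet_le_max_subdet[of "delete_nth p rs" "delete_nth q cs" A]
    by (simp add: mat_delete_square_submat subdet_eq_det_square_submat distinct_delete_nth
        length_delete_nth)
qed

lemma sum_distinct_list_nth: "distinct xs \<Longrightarrow> (\<Sum>x\<in>set xs. f x) = (\<Sum>p<length xs. f (xs ! p))"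
  by (simp add: sum.distinct_set_conv_list sum_list_sum_nth atLeast0LessThan)

lemma independent_image_coeffs_zero:
  fixes f :: "'i \<Rightarrow> 'a::real_vector"
  assumes "independent (f ` K)" "inj_on f K" "finite K"
    and "(\<Sum>q\<in>K. c q *\<^sub>R f q) = 0" "q \<in> K"
  shows "c q = 0"
proof -
  define d where "d b = c (the_inv_into K f b)" for b
  have "(\<Sum>b\<in>f ` K. d b *\<^sub>R b) = (\<Sum>q\<in>K. c q *\<^sub>R f q)"
    using assms(2) by (simp add: sum.reindex d_def the_inv_into_f_f)
  then have "d (f q) = 0"
    using assms by (intro independentD[of "f ` K" "f ` K" d]) auto
  then show ?thesis using assms(2,5) by (simp add: d_def the_inv_into_f_f)
qed

lemma row_eq: "row i A = A $ i"
  by (simp add: Finite_Cartesian_Product.row_def Finite_Cartesian_Product.vec_eq_iff)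

definition column_on_rows :: "'m set \<Rightarrow> real^'n^'m \<Rightarrow> 'n \<Rightarrow> real^'m" where
  "column_on_rows J A c = (\<chi> i. if i \<in> J then A $ i $ c else 0)"

lemma span_columns_on_independent_rows:
  fixes A :: "real^'n^'m"
  assumes indep: "\<And>w. \<forall>i. i \<notin> J \<longrightarrow> w i = 0 \<Longrightarrow> (\<Sum>i\<in>UNIV. w i *\<^sub>R row i A) = 0 \<Longrightarrow>
      \<forall>i. w i = 0"
  shows "span (range (column_on_rows J A)) = {x. \<forall>i. i \<notin> J \<longrightarrow> x $ i = 0}"
    (is "span ?C = ?W")
proof (rule ccontr)
  assume ne: "span ?C \<noteq> ?W"
  have W: "subspace ?W" by (auto simp: subspace_def)
  then have sub: "span ?C \<subseteq> ?W" by (intro span_minimal) (auto simp: column_on_rows_def)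
  have spanW: "span ?W = ?W" using W by (simp add: span_eq_iff)
  have "span ?C \<subset> span ?W" unfolding spanW using sub ne by (rule psubsetI)
  then obtain y where y: "y \<noteq> 0" "y \<in> span ?W" and orth: "\<And>z. z \<in> span ?C \<Longrightarrow> orthogonal y z"
    using orthogonal_to_subspace_exists_gen by blast
  have yW: "y \<in> ?W" using y(2) unfolding spanW .
  have "(\<Sum>i\<in>UNIV. (y $ i) *\<^sub>R row i A) $ c = y \<bullet> column_on_rows J A c" for c
    using yW by (auto simp: row_eq inner_vec_def column_on_rows_def intro!: sum.cong)
  also have "y \<bullet> column_on_rows J A c = 0" for c
    using orth[of "column_on_rows J A c"] by (simp add: span_base real_inner_class.orthogonal_def)
  finally have "\<forall>i. y $ i = 0"
    using yW by (intro indep) (auto simp: Finite_Cartesian_Product.vec_eq_iff)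
  with y(1) show False by (simp add: Finite_Cartesian_Product.vec_eq_iff)
qed

lemma subdet_nonzero_if_independent_columns:
  fixes A :: "real^'n^'m"
  assumes cs: "distinct cs" "length cs = length rs"
    and inj: "inj_on (column_on_rows (set rs) A) (set cs)"
    and indep: "independent (column_on_rows (set rs) A ` set cs)"
  shows "subdet A rs cs \<noteq> 0"
proof
  define k where "k = length rs"
  define M where "M = square_submat A rs cs"
  define f where "f q = column_on_rows (set rs) A (cs ! q)" for q
  have M: "M \<in> carrier_mat k k" by (simp add: M_def k_def square_submat_carrier)
  assume "subdet A rs cs = 0"
  then obtain v where v: "v \<in> carrier_vec k" "v \<noteq> 0\<^sub>v k" "M *\<^sub>v v = 0\<^sub>v k"
    using det_0_iff_vec_prod_zero_field[OF M] by (auto simp: M_def subdet_eq_det_square_submat)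
  have f_inj: "inj_on f {..<k}"
    using inj cs unfolding f_def inj_on_def k_def by (metis lessThan_iff nth_eq_iff_index_eq nth_mem)
  have f_image: "f ` {..<k} = column_on_rows (set rs) A ` set cs"
    using cs by (auto simp: f_def k_def set_conv_nth image_iff)
  have entry: "(\<Sum>q<k. vec_index v q *\<^sub>R f q) $ (rs ! p) = vec_index (M *\<^sub>v v) p"
    if "p < k" for p
    using that v(1) by (auto simp: f_def column_on_rows_def M_def square_submat_def k_def
        scalar_prod_def mult.commute atLeast0LessThan intro!: sum.cong)
  have "(\<Sum>q<k. vec_index v q *\<^sub>R f q) $ i = 0" for i
  proof (cases "i \<in> set rs")
    case True
    then obtain p where "p < k" "i = rs ! p" by (auto simp: k_def in_set_conv_nth)
    then show ?thesis using entry v(3) by simp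
  qed (simp add: f_def column_on_rows_def)
  then have "(\<Sum>q<k. vec_index v q *\<^sub>R f q) = 0"
    by (subst Finite_Cartesian_Product.vec_eq_iff) simp
  from independent_image_coeffs_zero[OF indep[folded f_image] f_inj finite_lessThan this]
  have "v = 0\<^sub>v k" using v(1) by (intro eq_vecI) auto
  with v(2) show False by simp
qed

lemma independent_rows_nonsingular_submatrix:
  fixes A :: "real^'n^'m"
  assumes indep: "\<And>w. \<forall>i. i \<notin> J \<longrightarrow> w i = 0 \<Longrightarrow> (\<Sum>i\<in>UNIV. w i *\<^sub>R row i A) = 0 \<Longrightarrow>
      \<forall>i. w i = 0"
  obtains rs cs where "set rs = J" "distinct rs" "distinct cs" "length cs = length rs"
    "subdet A rs cs \<noteq> 0"
proof -
  have W_eq: "{x. \<forall>i. i \<notin> J \<longrightarrow> x $ i = 0}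
      = {x :: real^'m. \<forall>b\<in>Basis. b \<notin> (\<lambda>i. axis i 1) ` J \<longrightarrow> x \<bullet> b = 0}"
    by (auto simp: Basis_vec_def inner_axis axis_eq_axis image_iff)
  have "dim (range (column_on_rows J A)) = dim (span (range (column_on_rows J A)))"
    by (rule dim_span[symmetric])
  also have "\<dots> = dim {x :: real^'m. \<forall>b\<in>Basis. b \<notin> (\<lambda>i. axis i 1) ` J \<longrightarrow> x \<bullet> b = 0}"
    by (simp only: span_columns_on_independent_rows[OF indep] W_eq)
  also have "\<dots> = card J"
    by (subst dim_substandard) (auto simp: Basis_vec_def card_image inj_on_def axis_eq_axis)
  finally have "dim (range (column_on_rows J A)) = card J" .
  then obtain B where B: "B \<subseteq> range (column_on_rows J A)" "independent B" "card B = card J"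
    using basis_exists[of "range (column_on_rows J A)"] by metis
  then obtain C where C: "inj_on (column_on_rows J A) C" "B = column_on_rows J A ` C"
    using subset_image_inj[of B "column_on_rows J A" UNIV] by blast
  obtain rs where rs: "set rs = J" "distinct rs" using finite_distinct_list[of J] by auto
  obtain cs where cs: "set cs = C" "distinct cs" using finite_distinct_list[of C] by auto
  have "length cs = length rs" using B(3) C rs cs by (simp add: card_image flip: distinct_card)
  with rs cs B(2) C show thesis
    by (intro that[of rs cs] subdet_nonzero_if_independent_columns) auto
qed

lemma abs_dual_multiplier_le:
  fixes A :: "real^'n^'m" and \<alpha> :: "real^'n" and u :: "'m \<Rightarrow> real"
  assumes A_int: "\<forall>i j. A $ i $ j \<in> \<int>"
    and support: "\<forall>i. i \<notin> set rs \<longrightarrow> u i = 0"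
    and u_sum: "(\<Sum>i\<in>UNIV. u i *\<^sub>R row i A) = - \<alpha>"
    and rs: "distinct rs" and cs: "distinct cs" "length cs = length rs"
    and det_nonzero: "subdet A rs cs \<noteq> 0"
    and p: "p < length rs"
  shows "\<bar>u (rs ! p)\<bar> \<le> max_subdet A * (\<Sum>j\<in>UNIV. \<bar>\<alpha> $ j\<bar>)"
proof -
  define k where "k = length rs"
  define M where "M = square_submat A rs cs"
  have M: "M \<in> carrier_mat k k" by (simp add: M_def k_def square_submat_carrier)
  have det_ge: "1 \<le> \<bar>det M\<bar>"
    using det_nonzero det_square_submat_Ints[OF A_int]
    by (simp add: M_def subdet_eq_det_square_submat Ints_nonzero_abs_ge1)
  have "\<bar>subdet A rs cs\<bar> \<le> max_subdet A"
    using rs cs p by (intro abs_subdet_le_max_subdet) auto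
  then have \<Delta>_ge: "1 \<le> max_subdet A"
    using det_ge by (simp add: M_def subdet_eq_det_square_submat)
  have "(\<Sum>i<k. u (rs ! i) * M $$ (i, q)) = - \<alpha> $ (cs ! q)" if q: "q < k" for q
  proof -
    have "(\<Sum>i<k. u (rs ! i) * M $$ (i, q)) = (\<Sum>i\<in>set rs. u i * A $ i $ (cs ! q))"
      using q rs sum_distinct_list_nth[of rs "\<lambda>i. u i * A $ i $ (cs ! q)"]
      by (simp add: M_def square_submat_def k_def)
    also have "\<dots> = (\<Sum>i\<in>UNIV. u i *\<^sub>R row i A) $ (cs ! q)"
      using support by (simp add: row_eq) (intro sum.mono_neutral_left, auto)
    finally show ?thesis by (simp add: u_sum)
  qed
  then have "\<bar>u (rs ! p)\<bar> \<le> max_subdet A * (\<Sum>q<k. \<bar>- \<alpha> $ (cs ! q)\<bar>)"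
    using p rs cs \<Delta>_ge
    by (intro cramer_abs_bound[OF M det_ge]) (auto simp: M_def k_def abs_det_minor_le_max_subdet)
  also have "(\<Sum>q<k. \<bar>- \<alpha> $ (cs ! q)\<bar>) = (\<Sum>j\<in>set cs. \<bar>\<alpha> $ j\<bar>)"
    using sum_distinct_list_nth[of cs "\<lambda>j. \<bar>\<alpha> $ j\<bar>"] cs by (simp add: k_def)
  also have "\<dots> \<le> (\<Sum>j\<in>UNIV. \<bar>\<alpha> $ j\<bar>)" by (rule sum_mono2) auto
  finally show ?thesis using \<Delta>_ge by (smt (verit) mult_left_mono)
qed

lemma dual_multiplier_sum_bound:
  fixes A :: "real^'n^'m" and \<alpha> :: "real^'n" and u :: "'m \<Rightarrow> real"
  assumes A_int: "\<forall>i j. A $ i $ j \<in> \<int>"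
    and u_sum: "(\<Sum>i\<in>UNIV. u i *\<^sub>R row i A) = - \<alpha>"
    and indep: "\<And>w. \<forall>i. u i = 0 \<longrightarrow> w i = 0 \<Longrightarrow> (\<Sum>i\<in>UNIV. w i *\<^sub>R row i A) = 0 \<Longrightarrow>
      \<forall>i. w i = 0"
  shows "(\<Sum>i\<in>UNIV. u i) \<le> real CARD('n) * (\<Sum>j\<in>UNIV. \<bar>\<alpha> $ j\<bar>) * max_subdet A"
proof -
  define J where "J = {i. u i \<noteq> 0}"
  have indep_J: "\<forall>i. w i = 0"
    if "\<forall>i. i \<notin> J \<longrightarrow> w i = 0" "(\<Sum>i\<in>UNIV. w i *\<^sub>R row i A) = 0" for w
    using indep that by (simp add: J_def)
  obtain rs cs where rs: "set rs = J" "distinct rs" and cs: "distinct cs" "length cs = length rs"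
    and det_nonzero: "subdet A rs cs \<noteq> 0"
    by (rule independent_rows_nonsingular_submatrix[OF indep_J])
  have "(\<Sum>i\<in>UNIV. u i) = (\<Sum>i\<in>set rs. u i)"
    using rs(1) by (intro sum.mono_neutral_right) (auto simp: J_def)
  also have "\<dots> = (\<Sum>p<length rs. u (rs ! p))"
    using rs(2) by (rule sum_distinct_list_nth)
  also have "\<dots> \<le> (\<Sum>p<length rs. max_subdet A * (\<Sum>j\<in>UNIV. \<bar>\<alpha> $ j\<bar>))"
    using abs_dual_multiplier_le[OF A_int _ u_sum rs(2) cs det_nonzero] rs(1)
    by (intro sum_mono) (fastforce simp: J_def)
  also have "\<dots> \<le> real CARD('n) * (max_subdet A * (\<Sum>j\<in>UNIV. \<bar>\<alpha> $ j\<bar>))"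
  proof -
    have "length rs \<le> CARD('n)" using cs card_mono[of UNIV "set cs"] by (simp add: distinct_card)
    then show ?thesis by (simp add: mult_right_mono sum_nonneg max_subdet_nonneg)
  qed
  finally show ?thesis by (simp add: mult_ac)
qed

lemma convex_cone_nonneg_combinations:
  "convex_cone {(\<Sum>i\<in>I. u i *\<^sub>R v i) | u. \<forall>i\<in>I. 0 \<le> u i}" (is "convex_cone ?K")
  unfolding convex_cone_iff
proof (intro conjI ballI allI impI)
  show "0 \<in> ?K" by (auto intro!: exI[of _ "\<lambda>_. 0"])
next
  fix y z assume "y \<in> ?K" "z \<in> ?K"
  then obtain p q where "\<forall>i\<in>I. 0 \<le> p i" "y = (\<Sum>i\<in>I. p i *\<^sub>R v i)"
    "\<forall>i\<in>I. 0 \<le> q i" "z = (\<Sum>i\<in>I. q i *\<^sub>R v i)" by blast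
  then show "y + z \<in> ?K"
    by (auto intro!: exI[of _ "\<lambda>i. p i + q i"] simp: sum.distrib scaleR_add_left)
next
  fix y and c :: real assume "y \<in> ?K" "0 \<le> c"
  then obtain p where "\<forall>i\<in>I. 0 \<le> p i" "y = (\<Sum>i\<in>I. p i *\<^sub>R v i)" by blast
  with \<open>0 \<le> c\<close> show "c *\<^sub>R y \<in> ?K"
    by (auto intro!: exI[of _ "\<lambda>i. c * p i"] simp: scaleR_sum_right)
qed

lemma farkas_lemma:
  fixes v :: "'i \<Rightarrow> 'a::euclidean_space"
  assumes "finite I"
  shows "(\<exists>u. (\<forall>i\<in>I. 0 \<le> u i) \<and> (\<Sum>i\<in>I. u i *\<^sub>R v i) = x)
    \<or> (\<exists>d. 0 < x \<bullet> d \<and> (\<forall>i\<in>I. v i \<bullet> d \<le> 0))"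
proof (cases "\<exists>u. (\<forall>i\<in>I. 0 \<le> u i) \<and> (\<Sum>i\<in>I. u i *\<^sub>R v i) = x")
  case False
  define K where "K = {(\<Sum>i\<in>I. u i *\<^sub>R v i) | u. \<forall>i\<in>I. 0 \<le> u i}"
  define H where "H = convex_cone hull (v ` I)"
  have "convex_cone K" unfolding K_def by (rule convex_cone_nonneg_combinations)
  moreover have "v i \<in> K" if "i \<in> I" for i
    unfolding K_def using that assms
    by (auto intro!: exI[of _ "\<lambda>j. if j = i then 1 else 0"]
        simp: if_distrib[of "\<lambda>c. c *\<^sub>R _"] cong: if_cong)
  ultimately have "H \<subseteq> K" unfolding H_def by (intro hull_minimal) auto
  then have "x \<notin> H" using False by (auto simp: K_def)
  then obtain a c where ac: "a \<bullet> x < c" "\<forall>y\<in>H. c < a \<bullet> y"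
    using separating_hyperplane_closed_point[OF _ closed_convex_cone_hull]
      convex_convex_cone_hull assms unfolding H_def by (metis finite_imageI)
  have "c < 0" using ac(2) convex_cone_hull_contains_0 by (force simp: H_def)
  have H_nonneg: "0 \<le> a \<bullet> y" if "y \<in> H" for y
  proof (rule ccontr)
    assume neg: "\<not> 0 \<le> a \<bullet> y"
    then have "(c / (a \<bullet> y)) *\<^sub>R y \<in> H"
      using that \<open>c < 0\<close> by (simp add: H_def convex_cone_hull_mul divide_nonpos_neg)
    then have "c < a \<bullet> ((c / (a \<bullet> y)) *\<^sub>R y)" using ac(2) by blast
    with neg show False by simp
  qed
  have "v i \<bullet> (- a) \<le> 0" if "i \<in> I" for i
  proof -
    have "v i \<in> H" unfolding H_def using that by (intro hull_inc) simp
    then have "0 \<le> a \<bullet> v i" by (rule H_nonneg)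
    then show ?thesis by (simp add: inner_commute)
  qed
  moreover have "0 < x \<bullet> (- a)" using ac(1) \<open>c < 0\<close> by (simp add: inner_commute)
  ultimately show ?thesis by blast
qed blast

lemma feasible_direction_step:
  fixes A :: "real^'n^'m"
  assumes z: "\<forall>i. row i A \<bullet> z \<le> b $ i"
    and d: "\<forall>i. row i A \<bullet> z = b $ i \<longrightarrow> row i A \<bullet> d \<le> 0"
  shows "\<exists>t>0. \<forall>i. row i A \<bullet> (z + t *\<^sub>R d) \<le> b $ i"
proof -
  have "\<forall>\<^sub>F t in at_right 0. row i A \<bullet> (z + t *\<^sub>R d) \<le> b $ i" for i
  proof (cases "row i A \<bullet> z = b $ i")
    case True
    show ?thesis
      using eventually_at_right_less[of 0] True d
      by (auto elim!: eventually_mono simp: inner_add_right mult_le_0_iff)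
  next
    case False
    then have "row i A \<bullet> z < b $ i" using z order_le_less by blast
    moreover have "((\<lambda>t. row i A \<bullet> (z + t *\<^sub>R d)) \<longlongrightarrow> row i A \<bullet> z) (at_right 0)"
      by (auto intro!: tendsto_eq_intros)
    ultimately show ?thesis using order_tendstoD(2) by (fastforce elim: eventually_mono)
  qed
  then have "\<forall>\<^sub>F t in at_right 0. 0 < t \<and> (\<forall>i. row i A \<bullet> (z + t *\<^sub>R d) \<le> b $ i)"
    by (intro eventually_conj eventually_at_right_less eventually_all_finite)
  then show ?thesis using eventually_happens'[OF trivial_limit_at_right_real] by blast
qed

lemma minimizer_dual_multiplier:
  fixes A :: "real^'n^'m"
  assumes z0: "\<forall>i. row i A \<bullet> z0 \<le> b $ i"
    and min: "\<And>y. \<forall>i. row i A \<bullet> y \<le> b $ i \<Longrightarrow> \<alpha> \<bullet> z0 \<le> \<alpha> \<bullet> y"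
  obtains u where "\<forall>i. 0 \<le> u i" "\<forall>i. row i A \<bullet> z0 \<noteq> b $ i \<longrightarrow> u i = 0"
    "(\<Sum>i\<in>UNIV. u i *\<^sub>R row i A) = - \<alpha>"
proof -
  define I where "I = {i. row i A \<bullet> z0 = b $ i}"
  have "finite I" by simp
  from farkas_lemma[OF this, of "\<lambda>i. row i A" "- \<alpha>"] show ?thesis
  proof (elim disjE exE conjE)
    fix u assume u: "\<forall>i\<in>I. 0 \<le> u i" "(\<Sum>i\<in>I. u i *\<^sub>R row i A) = - \<alpha>"
    have "(\<Sum>i\<in>UNIV. (if i \<in> I then u i else 0) *\<^sub>R row i A) = - \<alpha>"
      using u(2) by (simp add: if_distrib[of "\<lambda>c. c *\<^sub>R _"] sum.If_cases cong: if_cong)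
    with u(1) show thesis by (intro that[of "\<lambda>i. if i \<in> I then u i else 0"]) (auto simp: I_def)
  next
    fix d assume d: "0 < - \<alpha> \<bullet> d" "\<forall>i\<in>I. row i A \<bullet> d \<le> 0"
    have "\<forall>i. row i A \<bullet> z0 = b $ i \<longrightarrow> row i A \<bullet> d \<le> 0" using d(2) by (simp add: I_def)
    then obtain t where t: "0 < t" "\<forall>i. row i A \<bullet> (z0 + t *\<^sub>R d) \<le> b $ i"
      using feasible_direction_step[OF z0] by blast
    have "\<alpha> \<bullet> (z0 + t *\<^sub>R d) < \<alpha> \<bullet> z0"
      using t(1) d(1) by (simp add: inner_add_right mult_pos_neg)
    with min[OF t(2)] show ?thesis by simp
  qed
qed

lemma conic_combination_shrink_support:
  fixes v :: "'i::finite \<Rightarrow> 'a::real_vector"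
  assumes u: "\<forall>i. 0 \<le> u i"
    and w: "\<forall>i. u i = 0 \<longrightarrow> w i = 0" "(\<Sum>i\<in>UNIV. w i *\<^sub>R v i) = 0" "w j \<noteq> 0"
  shows "\<exists>u'. (\<forall>i. 0 \<le> u' i) \<and> {i. u' i \<noteq> 0} \<subset> {i. u i \<noteq> 0}
    \<and> (\<Sum>i\<in>UNIV. u' i *\<^sub>R v i) = (\<Sum>i\<in>UNIV. u i *\<^sub>R v i)"
proof -
  obtain y where y: "\<forall>i. u i = 0 \<longrightarrow> y i = 0" "(\<Sum>i\<in>UNIV. y i *\<^sub>R v i) = 0" "0 < y j"
  proof (cases "0 < w j")
    case False
    then show ?thesis using that[of "\<lambda>i. - w i"] w by (simp add: sum_negf)
  qed (use w in blast)
  define Q where "Q = {i. 0 < y i}"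
  define t where "t = Min ((\<lambda>i. u i / y i) ` Q)"
  have "t \<in> (\<lambda>i. u i / y i) ` Q" unfolding t_def using y(3) by (intro Min_in) (auto simp: Q_def)
  then obtain i0 where i0: "0 < y i0" "t = u i0 / y i0" by (auto simp: Q_def)
  have t_le: "t * y i \<le> u i" if "0 < y i" for i
    using that Min_le[of "(\<lambda>i. u i / y i) ` Q" "u i / y i"] by (simp add: t_def Q_def le_divide_eq)
  have "0 \<le> t" using i0 u by simp
  define u' where "u' i = u i - t * y i" for i
  have "0 \<le> u' i" for i
    using t_le[of i] spec[OF u, of i] mult_nonneg_nonpos[OF \<open>0 \<le> t\<close>, of "y i"]
    by (cases "0 < y i") (auto simp: u'_def)
  moreover have "{i. u' i \<noteq> 0} \<subseteq> {i. u i \<noteq> 0} - {i0}"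
    using y(1) i0 by (auto simp: u'_def)
  then have "{i. u' i \<noteq> 0} \<subset> {i. u i \<noteq> 0}" using y(1) i0(1) by force
  moreover have "(\<Sum>i\<in>UNIV. u' i *\<^sub>R v i)
      = (\<Sum>i\<in>UNIV. u i *\<^sub>R v i) - t *\<^sub>R (\<Sum>i\<in>UNIV. y i *\<^sub>R v i)"
    by (simp add: u'_def scaleR_diff_left sum_subtractf scaleR_sum_right)
  then have "(\<Sum>i\<in>UNIV. u' i *\<^sub>R v i) = (\<Sum>i\<in>UNIV. u i *\<^sub>R v i)" using y(2) by simp
  ultimately show ?thesis by blast
qed

lemma conic_caratheodory:
  fixes v :: "'i::finite \<Rightarrow> 'a::real_vector"
  assumes "\<forall>i. 0 \<le> u i" "(\<Sum>i\<in>UNIV. u i *\<^sub>R v i) = x"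
  obtains u' where "\<forall>i. 0 \<le> u' i" "\<forall>i. u i = 0 \<longrightarrow> u' i = 0" "(\<Sum>i\<in>UNIV. u' i *\<^sub>R v i) = x"
    "\<And>w. \<forall>i. u' i = 0 \<longrightarrow> w i = 0 \<Longrightarrow> (\<Sum>i\<in>UNIV. w i *\<^sub>R v i) = 0 \<Longrightarrow>
      \<forall>i. w i = 0"
proof -
  define P where "P y \<longleftrightarrow> (\<forall>i. 0 \<le> y i) \<and> (\<forall>i. u i = 0 \<longrightarrow> y i = 0)
    \<and> (\<Sum>i\<in>UNIV. y i *\<^sub>R v i) = x" for y
  obtain u' where "P u'" and minimal: "\<And>y. P y \<Longrightarrow> card {i. u' i \<noteq> 0} \<le> card {i. y i \<noteq> 0}"
    using ex_has_least_nat[of P u "\<lambda>y. card {i. y i \<noteq> 0}"] assms by (auto simp: P_def)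
  have indep: "\<forall>i. w i = 0"
    if w: "\<forall>i. u' i = 0 \<longrightarrow> w i = 0" "(\<Sum>i\<in>UNIV. w i *\<^sub>R v i) = 0" for w
  proof (rule ccontr)
    assume "\<not> (\<forall>i. w i = 0)"
    then obtain j where "w j \<noteq> 0" by blast
    then obtain y where "\<forall>i. 0 \<le> y i" and y: "{i. y i \<noteq> 0} \<subset> {i. u' i \<noteq> 0}"
      "(\<Sum>i\<in>UNIV. y i *\<^sub>R v i) = (\<Sum>i\<in>UNIV. u' i *\<^sub>R v i)"
      using conic_combination_shrink_support[of u' w v j] w \<open>P u'\<close> by (auto simp: P_def)
    then have "P y" using \<open>P u'\<close> by (auto simp: P_def)
    moreover have "card {i. y i \<noteq> 0} < card {i. u' i \<noteq> 0}" using y(1) by (simp add: psubset_card_mono)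
    ultimately show False using minimal by fastforce
  qed
  with \<open>P u'\<close> show thesis using that unfolding P_def by blast
qed

lemma integer_valued_attains_min:
  fixes f :: "'a \<Rightarrow> real"
  assumes "z1 \<in> Z" and Ints: "\<And>z. z \<in> Z \<Longrightarrow> f z \<in> \<int>"
    and lower: "\<And>z. z \<in> Z \<Longrightarrow> L \<le> f z"
  shows "\<exists>z0\<in>Z. \<forall>z\<in>Z. f z0 \<le> f z"
proof -
  obtain z0 where z0: "z0 \<in> Z"
    and least: "\<And>z. z \<in> Z \<Longrightarrow> nat (\<lfloor>f z0\<rfloor> - \<lfloor>L\<rfloor>) \<le> nat (\<lfloor>f z\<rfloor> - \<lfloor>L\<rfloor>)"
    using ex_has_least_nat[of "\<lambda>z. z \<in> Z" z1 "\<lambda>z. nat (\<lfloor>f z\<rfloor> - \<lfloor>L\<rfloor>)"] assms(1) by blast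
  have "f z0 \<le> f z" if z: "z \<in> Z" for z
  proof -
    have "\<lfloor>L\<rfloor> \<le> \<lfloor>f z0\<rfloor>" "\<lfloor>L\<rfloor> \<le> \<lfloor>f z\<rfloor>"
      using lower z0 z by (auto intro: floor_mono)
    then have "\<lfloor>f z0\<rfloor> \<le> \<lfloor>f z\<rfloor>" using least[OF z] by linarith
    moreover obtain m n where "f z0 = of_int m" "f z = of_int n"
      using Ints[OF z0] Ints[OF z] by (auto elim!: Ints_cases)
    ultimately show ?thesis by simp
  qed
  with z0 show ?thesis by blast
qed

lemma mult_vec_nth_eq_inner_row: "(A *v x) $ i = row i A \<bullet> x"
  by (simp add: matrix_vector_mult_def inner_vec_def row_eq)

lemma inner_int_points_Ints:
  assumes "\<forall>j. \<alpha> $ j \<in> \<int>" "z \<in> int_points"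
  shows "\<alpha> \<bullet> z \<in> \<int>"
  using assms unfolding int_points_def inner_vec_def by (auto intro!: Ints_sum Ints_mult)

lemma inf_gap_le_dual_slack:
  fixes A :: "real^'n^'m" and S Z :: "(real^'n) set"
  assumes "Z \<subseteq> S" "z0 \<in> Z"
    and bdd: "bdd_below ((\<lambda>x. \<alpha> \<bullet> x) ` S)"
    and b'_finite: "\<forall>i. bdd_above ((\<lambda>x. row i A \<bullet> x) ` S)"
    and u_nonneg: "\<forall>i. 0 \<le> u i"
    and compl: "\<forall>i. row i A \<bullet> z0 \<noteq> b $ i \<longrightarrow> u i = 0"
    and u_sum: "(\<Sum>i\<in>UNIV. u i *\<^sub>R row i A) = - \<alpha>"
  shows "(INF x\<in>Z. \<alpha> \<bullet> x) - (INF x\<in>S. \<alpha> \<bullet> x)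
    \<le> (\<Sum>i\<in>UNIV. u i * ((SUP x\<in>S. row i A \<bullet> x) - b $ i))"
proof -
  have \<alpha>_inner: "\<alpha> \<bullet> x = - (\<Sum>i\<in>UNIV. u i * (row i A \<bullet> x))" for x
    using arg_cong[OF u_sum, of "\<lambda>y. y \<bullet> x"] by (simp add: inner_sum_left)
  have compl': "u i * (row i A \<bullet> z0) = u i * b $ i" for i
    using compl by (cases "row i A \<bullet> z0 = b $ i") auto
  have "bdd_below ((\<lambda>x. \<alpha> \<bullet> x) ` Z)" using bdd by (rule bdd_below_mono) (use assms(1) in auto)
  then have "(INF x\<in>Z. \<alpha> \<bullet> x) \<le> \<alpha> \<bullet> z0" using assms(2) by (rule cINF_lower)
  also have "\<alpha> \<bullet> z0 = - (\<Sum>i\<in>UNIV. u i * b $ i)" by (simp add: \<alpha>_inner compl')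
  finally have Z_le: "(INF x\<in>Z. \<alpha> \<bullet> x) \<le> - (\<Sum>i\<in>UNIV. u i * b $ i)" .
  have "- (\<Sum>i\<in>UNIV. u i * (SUP x\<in>S. row i A \<bullet> x)) \<le> \<alpha> \<bullet> x" if "x \<in> S" for x
    unfolding \<alpha>_inner using that u_nonneg b'_finite
    by (simp add: sum_mono mult_left_mono cSUP_upper)
  then have "- (\<Sum>i\<in>UNIV. u i * (SUP x\<in>S. row i A \<bullet> x)) \<le> (INF x\<in>S. \<alpha> \<bullet> x)"
    using assms(1,2) by (intro cINF_greatest) auto
  with Z_le show ?thesis by (simp add: right_diff_distrib sum_subtractf)
qed

lemma inner_ge_on_convex_hull:
  assumes "\<forall>z\<in>Z. \<alpha> \<bullet> z0 \<le> \<alpha> \<bullet> z" "y \<in> convex hull Z"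
  shows "\<alpha> \<bullet> z0 \<le> \<alpha> \<bullet> y"
proof -
  have "convex hull Z \<subseteq> {x. \<alpha> \<bullet> z0 \<le> \<alpha> \<bullet> x}"
    using assms(1) by (intro hull_minimal) (auto simp: convex_halfspace_ge)
  then show ?thesis using assms(2) by blast
qed

lemma minimizer_independent_dual_multiplier:
  fixes A :: "real^'n^'m"
  assumes "\<forall>i. row i A \<bullet> z0 \<le> b $ i"
    and "\<And>y. \<forall>i. row i A \<bullet> y \<le> b $ i \<Longrightarrow> \<alpha> \<bullet> z0 \<le> \<alpha> \<bullet> y"
  obtains u where "\<forall>i. 0 \<le> u i" "\<forall>i. row i A \<bullet> z0 \<noteq> b $ i \<longrightarrow> u i = 0"
    "(\<Sum>i\<in>UNIV. u i *\<^sub>R row i A) = - \<alpha>"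
    "\<And>w. \<forall>i. u i = 0 \<longrightarrow> w i = 0 \<Longrightarrow> (\<Sum>i\<in>UNIV. w i *\<^sub>R row i A) = 0 \<Longrightarrow>
      \<forall>i. w i = 0"
proof -
  obtain u0 where u0: "\<forall>i. 0 \<le> u0 i" "\<forall>i. row i A \<bullet> z0 \<noteq> b $ i \<longrightarrow> u0 i = 0"
    "(\<Sum>i\<in>UNIV. u0 i *\<^sub>R row i A) = - \<alpha>"
    by (rule minimizer_dual_multiplier[OF assms])
  obtain u where u: "\<forall>i. 0 \<le> u i" "\<forall>i. u0 i = 0 \<longrightarrow> u i = 0"
    "(\<Sum>i\<in>UNIV. u i *\<^sub>R row i A) = - \<alpha>"
    "\<And>w. \<forall>i. u i = 0 \<longrightarrow> w i = 0 \<Longrightarrow> (\<Sum>i\<in>UNIV. w i *\<^sub>R row i A) = 0 \<Longrightarrow> \<forall>i. w i = 0"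
    using conic_caratheodory[OF u0(1) u0(3)] by blast
  have "\<forall>i. row i A \<bullet> z0 \<noteq> b $ i \<longrightarrow> u i = 0" using u0(2) u(2) by simp
  then show thesis by (rule that[OF u(1) _ u(3) u(4)])
qed

lemma weighted_sum_le_max_abs:
  fixes u c d :: "'i::finite \<Rightarrow> real"
  assumes "\<forall>i. 0 \<le> u i" "(\<Sum>i\<in>UNIV. u i) \<le> N"
  shows "(\<Sum>i\<in>UNIV. u i * (d i - c i)) \<le> N * (1 + (MAX i\<in>UNIV. \<bar>c i - d i\<bar>))"
proof -
  define M where "M = (MAX i\<in>UNIV. \<bar>c i - d i\<bar>)"
  have M_ge: "\<bar>c i - d i\<bar> \<le> M" for i unfolding M_def by (rule Max_ge) auto
  have "(\<Sum>i\<in>UNIV. u i * (d i - c i)) \<le> (\<Sum>i\<in>UNIV. u i) * M"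
    using assms(1) M_ge by (auto simp: sum_distrib_right abs_le_iff intro!: sum_mono mult_left_mono)
  also have "\<dots> \<le> N * (1 + M)"
    using assms M_ge[of undefined] sum_nonneg[of UNIV u] by (intro mult_mono) auto
  finally show ?thesis by (simp add: M_def)
qed

theorem theorem4p3:
  fixes \<alpha> :: "real^'n" and S :: "(real^'n) set"
    and A :: "real^'n^'m" and b :: "real^'m"
  assumes alpha_int: "\<forall>j. \<alpha> $ j \<in> \<int>"
    and A_int: "\<forall>i j. A $ i $ j \<in> \<int>"
    and S_convex: "convex S"
    and hull_eq: "convex hull (S \<inter> int_points) = {x. \<forall>i. (A *v x) $ i \<le> b $ i}"
    and P_nonempty: "{x. \<forall>i. (A *v x) $ i \<le> b $ i} \<noteq> {}"
    and rec: "rec_cone S = {x. \<forall>i. (A *v x) $ i \<le> 0}"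
    and bdd: "bdd_below ((\<lambda>x. \<alpha> \<bullet> x) ` S)"
    and b'_finite: "\<forall>i. bdd_above ((\<lambda>x. row i A \<bullet> x) ` S)"
  shows "(INF x\<in>S \<inter> int_points. \<alpha> \<bullet> x) - (INF x\<in>S. \<alpha> \<bullet> x)
         \<le> real CARD('n) * (\<Sum>j\<in>UNIV. \<bar>\<alpha> $ j\<bar>) * max_subdet A *
            (1 + (MAX i\<in>UNIV. \<bar>b $ i - (SUP x\<in>S. row i A \<bullet> x)\<bar>))"
proof -
  define Z where "Z = S \<inter> int_points"
  have P_eq: "convex hull Z = {x. \<forall>i. row i A \<bullet> x \<le> b $ i}"
    using hull_eq by (simp add: Z_def mult_vec_nth_eq_inner_row)
  obtain z1 where "z1 \<in> Z" using hull_eq P_nonempty convex_hull_eq_empty[of Z] by (auto simp: Z_def)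
  moreover obtain L where "\<forall>x\<in>S. L \<le> \<alpha> \<bullet> x" using bdd by (auto simp: bdd_below_def)
  ultimately have "\<exists>z0\<in>Z. \<forall>z\<in>Z. \<alpha> \<bullet> z0 \<le> \<alpha> \<bullet> z"
    by (intro integer_valued_attains_min[of z1])
      (auto simp: Z_def intro: inner_int_points_Ints[OF alpha_int])
  then obtain z0 where z0: "z0 \<in> Z" and z0_min: "\<forall>z\<in>Z. \<alpha> \<bullet> z0 \<le> \<alpha> \<bullet> z" by blast
  have z0_feasible: "\<forall>i. row i A \<bullet> z0 \<le> b $ i" using hull_inc[OF z0, of convex] unfolding P_eq by simp
  obtain u where u: "\<forall>i. 0 \<le> u i" "\<forall>i. row i A \<bullet> z0 \<noteq> b $ i \<longrightarrow> u i = 0"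
    "(\<Sum>i\<in>UNIV. u i *\<^sub>R row i A) = - \<alpha>"
    and indep: "\<And>w. \<forall>i. u i = 0 \<longrightarrow> w i = 0 \<Longrightarrow> (\<Sum>i\<in>UNIV. w i *\<^sub>R row i A) = 0 \<Longrightarrow>
      \<forall>i. w i = 0"
    using minimizer_independent_dual_multiplier[OF z0_feasible inner_ge_on_convex_hull[OF z0_min]]
    unfolding P_eq by blast
  have "(INF x\<in>Z. \<alpha> \<bullet> x) - (INF x\<in>S. \<alpha> \<bullet> x)
      \<le> (\<Sum>i\<in>UNIV. u i * ((SUP x\<in>S. row i A \<bullet> x) - b $ i))"
    using inf_gap_le_dual_slack[OF _ z0 bdd b'_finite u] by (simp add: Z_def)
  also have "\<dots> \<le> real CARD('n) * (\<Sum>j\<in>UNIV. \<bar>\<alpha> $ j\<bar>) * max_subdet A *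
      (1 + (MAX i\<in>UNIV. \<bar>b $ i - (SUP x\<in>S. row i A \<bullet> x)\<bar>))"
    by (rule weighted_sum_le_max_abs[OF u(1) dual_multiplier_sum_bound[OF A_int u(3) indep]])
  finally show ?thesis by (simp add: Z_def)
qed

end
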